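(* If $\mathbf A$ is a subdirectly irreducible algebra of type $F$, then every state-morphism algebra $(\mathbf A,\tau)$ is subdirectly irreducible.
   Context: A state-morphism on an algebra $\mathbf A$ of type $F$ is an endomorphism $\tau$ of $\mathbf A$ with $\tau\circ\tau=\tau$; $(\mathbf A,\tau)$ is a state-morphism algebra, i.e. the algebra of type $F$ extended by the unary operation $\tau$, and subdirect irreducibility refers to this extended algebra. *)

theory Defs
  imports Main
begin

definition is_algebra :: "'a set \<Rightarrow> ('f \<Rightarrow> nat) \<Rightarrow> ('f \<Rightarrow> 'a list \<Rightarrow> 'a) \<Rightarrow> bool" where
  "is_algebra A ar ops \<longleftrightarrow> A \<noteq> {} \<and>
     (\<forall>f xs. length xs = ar f \<and> set xs \<subseteq> A \<longrightarrow> ops f xs \<in> A)"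

definition congruence :: "'a set \<Rightarrow> ('f \<Rightarrow> nat) \<Rightarrow> ('f \<Rightarrow> 'a list \<Rightarrow> 'a) \<Rightarrow> 'a rel \<Rightarrow> bool" where
  "congruence A ar ops \<theta> \<longleftrightarrow> equiv A \<theta> \<and>
     (\<forall>f xs ys. length xs = ar f \<and> length ys = ar f \<and> set xs \<subseteq> A \<and> set ys \<subseteq> A \<and>
        list_all2 (\<lambda>x y. (x, y) \<in> \<theta>) xs ys \<longrightarrow> (ops f xs, ops f ys) \<in> \<theta>)"

definition subdirectly_irreducible :: "'a set \<Rightarrow> ('f \<Rightarrow> nat) \<Rightarrow> ('f \<Rightarrow> 'a list \<Rightarrow> 'a) \<Rightarrow> bool" where
  "subdirectly_irreducible A ar ops \<longleftrightarrow> is_algebra A ar ops \<and>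
     (\<exists>a\<in>A. \<exists>b\<in>A. a \<noteq> b) \<and>
     (\<exists>\<mu>. congruence A ar ops \<mu> \<and> \<mu> \<noteq> Id_on A \<and>
        (\<forall>\<psi>. congruence A ar ops \<psi> \<and> \<psi> \<noteq> Id_on A \<longrightarrow> \<mu> \<subseteq> \<psi>))"

definition endomorphism :: "'a set \<Rightarrow> ('f \<Rightarrow> nat) \<Rightarrow> ('f \<Rightarrow> 'a list \<Rightarrow> 'a) \<Rightarrow> ('a \<Rightarrow> 'a) \<Rightarrow> bool" where
  "endomorphism A ar ops h \<longleftrightarrow> h ` A \<subseteq> A \<and>
     (\<forall>f xs. length xs = ar f \<and> set xs \<subseteq> A \<longrightarrow> h (ops f xs) = ops f (map h xs))"

definition state_morphism :: "'a set \<Rightarrow> ('f \<Rightarrow> nat) \<Rightarrow> ('f \<Rightarrow> 'a list \<Rightarrow> 'a) \<Rightarrow> ('a \<Rightarrow> 'a) \<Rightarrow> bool" where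
  "state_morphism A ar ops \<tau> \<longleftrightarrow> endomorphism A ar ops \<tau> \<and> (\<forall>x\<in>A. \<tau> (\<tau> x) = \<tau> x)"

text \<open>The state-morphism algebra (A, tau): type F extended by one new unary symbol (None).\<close>

definition sm_arity :: "('f \<Rightarrow> nat) \<Rightarrow> 'f option \<Rightarrow> nat" where
  "sm_arity ar = case_option 1 ar"

definition sm_ops :: "('f \<Rightarrow> 'a list \<Rightarrow> 'a) \<Rightarrow> ('a \<Rightarrow> 'a) \<Rightarrow> 'f option \<Rightarrow> 'a list \<Rightarrow> 'a" where
  "sm_ops ops \<tau> = case_option (\<lambda>xs. \<tau> (hd xs)) ops"

end

theory Submission
  imports Defs
begin

text \<open>Every congruence of \<open>(A, \<tau>)\<close> is a congruence of \<open>A\<close>, so every non-identity congruence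
  of \<open>(A, \<tau>)\<close> contains the monolith \<open>\<mu>\<close> of \<open>A\<close>. Hence the intersection of all non-identity
  congruences of \<open>(A, \<tau>)\<close> is again a congruence containing \<open>\<mu>\<close>, in particular it is not
  the identity, and it is the monolith of \<open>(A, \<tau>)\<close>.\<close>

lemma congruence_Id_on_subset:
  assumes "congruence A ar ops \<theta>"
  shows "Id_on A \<subseteq> \<theta>"
  using assms unfolding congruence_def equiv_def refl_on_def by auto

lemma congruence_full:
  assumes "is_algebra A ar ops"
  shows "congruence A ar ops (A \<times> A)"
  using assms unfolding congruence_def is_algebra_def
  by (auto simp: equiv_def refl_on_def sym_def trans_def)

lemma congruence_Inter:
  assumes "\<S> \<noteq> {}" and "\<And>\<psi>. \<psi> \<in> \<S> \<Longrightarrow> congruence A ar ops \<psi>"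
  shows "congruence A ar ops (\<Inter>\<S>)"
proof -
  have equiv: "\<And>\<psi>. \<psi> \<in> \<S> \<Longrightarrow> equiv A \<psi>"
    using assms(2) unfolding congruence_def by blast
  have "equiv A (\<Inter>\<S>)"
  proof (rule equivI)
    show "\<Inter>\<S> \<subseteq> A \<times> A"
      using assms(1) equiv unfolding equiv_def refl_on_def by blast
    show "refl_on A (\<Inter>\<S>)"
      using assms(1) equiv unfolding equiv_def refl_on_def by blast
    show "sym (\<Inter>\<S>)"
      using equiv unfolding equiv_def by (blast intro: symI dest: symD)
    show "trans (\<Inter>\<S>)"
      using equiv unfolding equiv_def by (blast intro: transI dest: transD)
  qed
  moreover have "(ops f xs, ops f ys) \<in> \<Inter>\<S>"
    if "length xs = ar f" "length ys = ar f" "set xs \<subseteq> A" "set ys \<subseteq> A"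
      and related: "list_all2 (\<lambda>x y. (x, y) \<in> \<Inter>\<S>) xs ys" for f xs ys
  proof
    fix \<psi> assume "\<psi> \<in> \<S>"
    moreover from this related have "list_all2 (\<lambda>x y. (x, y) \<in> \<psi>) xs ys"
      by (auto elim: list_all2_mono)
    ultimately show "(ops f xs, ops f ys) \<in> \<psi>"
      using that assms(2) unfolding congruence_def by blast
  qed
  ultimately show ?thesis unfolding congruence_def by blast
qed

lemma subdirectly_irreducible_if_congruences_inherited:
  assumes si: "subdirectly_irreducible A ar ops"
    and alg: "is_algebra A ar' ops'"
    and inherited: "\<And>\<psi>. congruence A ar' ops' \<psi> \<Longrightarrow> congruence A ar ops \<psi>"
  shows "subdirectly_irreducible A ar' ops'"
proof -
  from si have nontrivial: "\<exists>a\<in>A. \<exists>b\<in>A. a \<noteq> b"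
    unfolding subdirectly_irreducible_def by blast
  from si obtain \<mu> where \<mu>: "congruence A ar ops \<mu>" "\<mu> \<noteq> Id_on A"
    and \<mu>_least: "\<And>\<psi>. congruence A ar ops \<psi> \<Longrightarrow> \<psi> \<noteq> Id_on A \<Longrightarrow> \<mu> \<subseteq> \<psi>"
    unfolding subdirectly_irreducible_def by blast
  define \<S> where "\<S> = {\<psi>. congruence A ar' ops' \<psi> \<and> \<psi> \<noteq> Id_on A}"
  have "A \<times> A \<in> \<S>"
    using congruence_full[OF alg] nontrivial unfolding \<S>_def by (auto simp: Id_on_def)
  then have cong: "congruence A ar' ops' (\<Inter>\<S>)"
    by (intro congruence_Inter) (auto simp: \<S>_def)
  have "\<mu> \<subseteq> \<Inter>\<S>"
    using \<mu>_least inherited unfolding \<S>_def by blast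
  moreover have "\<not> \<mu> \<subseteq> Id_on A"
    using congruence_Id_on_subset[OF \<mu>(1)] \<mu>(2) by blast
  ultimately have "\<Inter>\<S> \<noteq> Id_on A" by blast
  with cong alg nontrivial show ?thesis
    unfolding subdirectly_irreducible_def \<S>_def by blast
qed

lemma is_algebra_sm:
  assumes "is_algebra A ar ops" and "\<tau> ` A \<subseteq> A"
  shows "is_algebra A (sm_arity ar) (sm_ops ops \<tau>)"
  unfolding is_algebra_def
proof (intro conjI allI impI)
  show "A \<noteq> {}" using assms(1) unfolding is_algebra_def by blast
  fix f xs assume xs: "length xs = sm_arity ar f \<and> set xs \<subseteq> A"
  show "sm_ops ops \<tau> f xs \<in> A"
  proof (cases f)
    case None
    with xs obtain x where "xs = [x]" by (auto simp: sm_arity_def length_Suc_conv)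
    with None xs assms(2) show ?thesis by (auto simp: sm_ops_def)
  next
    case Some
    with xs assms(1) show ?thesis by (auto simp: sm_ops_def sm_arity_def is_algebra_def)
  qed
qed

lemma congruence_sm_imp_congruence:
  assumes "congruence A (sm_arity ar) (sm_ops ops \<tau>) \<psi>"
  shows "congruence A ar ops \<psi>"
  using assms unfolding congruence_def
  by (metis option.simps(5) sm_arity_def sm_ops_def)

theorem theorem4p5:
  fixes A :: "'a set" and ar :: "'f \<Rightarrow> nat" and ops :: "'f \<Rightarrow> 'a list \<Rightarrow> 'a"
    and \<tau> :: "'a \<Rightarrow> 'a"
  assumes "subdirectly_irreducible A ar ops"
    and "state_morphism A ar ops \<tau>"
  shows "subdirectly_irreducible A (sm_arity ar) (sm_ops ops \<tau>)"
proof (rule subdirectly_irreducible_if_congruences_inherited[OF assms(1)])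
  have "is_algebra A ar ops"
    using assms(1) unfolding subdirectly_irreducible_def by blast
  moreover have "\<tau> ` A \<subseteq> A"
    using assms(2) unfolding state_morphism_def endomorphism_def by blast
  ultimately show "is_algebra A (sm_arity ar) (sm_ops ops \<tau>)"
    by (rule is_algebra_sm)
qed (rule congruence_sm_imp_congruence)

end
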